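(* Let $L>0$, $l\ge2$ an integer, and let real coefficients $a_{l+j,l-j},b_{l+j,l-j}$ ($j=1,\dots,l-1$) satisfy the Coefficient Conditions. Then there is a constant $M>0$ depending only on $l$ and these coefficients such that every $u\in C^{2l+1}([0,L])$ satisfying the Boundary Conditions obeys $$\sum_{j=1}^{l}(-1)^{j+1}(D^{2j+1}u,u)\ \ge\ M\Big(\sum_{i=1}^{l-1}\big[(D^iu(L))^2+(D^iu(0))^2\big]+(D^lu(0))^2\Big)\ \ge 0.$$
   Context: $D^i=\frac{d^i}{dx^i}$, $(f,g)=\int_0^L fg\,dx$. Boundary Conditions: $u(0)=u(L)=D^lu(L)=0$; $D^{l+j}u(0)=a_{l+j,l-j}D^{l-j}u(0)$ and $D^{l+j}u(L)=b_{l+j,l-j}D^{l-j}u(L)$ for $j=1,\dots,l-1$. Coefficient Conditions: - If $l=2$: $b_{3,1}>\tfrac12$ and $a_{3,1}<\tfrac12$. - If $l=3$: $b_{5,1}<-\tfrac12$, $b_{4,2}>\tfrac12$, $a_{5,1}>\tfrac12$, $a_{4,2}<\tfrac12$. - If $l\ge4$: $b_{l+1,l-1}>l-2$, $b_{l+2,l-2}<2-l$, $a_{l+1,l-1}<5-2l$, $a_{l+2,l-2}>2l-5$; for odd $j$ with $3\le j\le l-1$: $b_{l+j,l-j}>l-2+\frac12\big(\sum_{m=1}^{(j-1)/2}|b_{l+2m-1,l-2m+1}|\big)^2$ and $a_{l+j,l-j}<5-2l-\frac12\big(\sum_{m=1}^{(j-1)/2}|a_{l+2m-1,l-2m+1}|\big)^2$;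 for even $j$ with $4\le j\le l-1$: $b_{l+j,l-j}<2-l-\frac12\big(\sum_{m=1}^{j/2-1}|b_{l+2m,l-2m}|\big)^2$ and $a_{l+j,l-j}>2l-5+\frac12\big(\sum_{m=1}^{j/2-1}|a_{l+2m,l-2m}|\big)^2$. *)

theory Defs
  imports "HOL-Analysis.Analysis"
begin

text \<open>D k is the k-th derivative of u = D 0 on the closed interval [0,L]
  (one-sided at the endpoints); u is of class C^k on [0,L].\<close>
definition Ck_family :: "nat \<Rightarrow> real \<Rightarrow> (nat \<Rightarrow> real \<Rightarrow> real) \<Rightarrow> bool" where
  "Ck_family k L D \<longleftrightarrow>
     (\<forall>i<k. \<forall>x\<in>{0..L}. (D i has_real_derivative D (Suc i) x) (at x within {0..L}))
     \<and> continuous_on {0..L} (D k)"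

text \<open>Boundary conditions; a j stands for a_{l+j,l-j}, b j for b_{l+j,l-j}.\<close>
definition boundary_conds :: "nat \<Rightarrow> real \<Rightarrow> (nat \<Rightarrow> real) \<Rightarrow> (nat \<Rightarrow> real)
    \<Rightarrow> (nat \<Rightarrow> real \<Rightarrow> real) \<Rightarrow> bool" where
  "boundary_conds l L a b D \<longleftrightarrow>
     D 0 0 = 0 \<and> D 0 L = 0 \<and> D l L = 0 \<and>
     (\<forall>j\<in>{1..l-1}. D (l+j) 0 = a j * D (l-j) 0 \<and> D (l+j) L = b j * D (l-j) L)"

definition coeff_conds :: "nat \<Rightarrow> (nat \<Rightarrow> real) \<Rightarrow> (nat \<Rightarrow> real) \<Rightarrow> bool" where
  "coeff_conds l a b \<longleftrightarrow>
    (if l = 2 then b 1 > 1/2 \<and> a 1 < 1/2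
     else if l = 3 then b 2 < -1/2 \<and> b 1 > 1/2 \<and> a 2 > 1/2 \<and> a 1 < 1/2
     else
       b 1 > real l - 2 \<and> b 2 < 2 - real l \<and> a 1 < 5 - 2 * real l \<and> a 2 > 2 * real l - 5 \<and>
       (\<forall>j. odd j \<and> 3 \<le> j \<and> j \<le> l - 1 \<longrightarrow>
          b j > real l - 2 + (1/2) * (\<Sum>m=1..(j-1) div 2. \<bar>b (2*m-1)\<bar>)^2 \<and>
          a j < 5 - 2 * real l - (1/2) * (\<Sum>m=1..(j-1) div 2. \<bar>a (2*m-1)\<bar>)^2) \<and>
       (\<forall>j. even j \<and> 4 \<le> j \<and> j \<le> l - 1 \<longrightarrow>
          b j < 2 - real l - (1/2) * (\<Sum>m=1..j div 2 - 1. \<bar>b (2*m)\<bar>)^2 \<and>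
          a j > 2 * real l - 5 + (1/2) * (\<Sum>m=1..j div 2 - 1. \<bar>a (2*m)\<bar>)^2))"

end

theory Submission
  imports Defs
begin

text \<open>Integrating by parts, every integral \<open>(D\<^sup>2\<^sup>j\<^sup>+\<^sup>1u, u)\<close> is a quadratic form in the derivatives
  of \<open>u\<close> at the two endpoints, so the alternating sum equals \<open>Q(u(L)) - Q(u(0))\<close> for an explicit
  form \<open>Q\<close>. The boundary conditions express the derivatives of order above \<open>l\<close> through those
  of order below \<open>l\<close>; then \<open>Q\<close> becomes a diagonal form, with coefficients given by the boundary
  coefficients shifted by \<open>1/2\<close>, plus cross terms \<open>Z\<^sub>2\<^sub>j\<^sub>-\<^sub>i Z\<^sub>i\<close> with \<open>i < j < l\<close>. Each cross term
  is split by AM-GM into two squares of derivatives of order at most \<open>l\<close> (an index \<open>p > l\<close> is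
  first reflected to \<open>2l - p\<close> through the boundary relations). Counting how often each square
  occurs yields a bound on the cross terms that the coefficient conditions dominate with a
  positive margin, which is the constant \<open>M\<close>. For \<open>l = 2, 3\<close> there is at most one cross term and
  the margins are read off directly.\<close>

section \<open>Integration by parts\<close>

definition pair_integral :: "real \<Rightarrow> (nat \<Rightarrow> real \<Rightarrow> real) \<Rightarrow> nat \<Rightarrow> nat \<Rightarrow> real" where
  "pair_integral L D p q = integral {0..L} (\<lambda>x. D p x * D q x)"

definition pair_jump :: "real \<Rightarrow> (nat \<Rightarrow> real \<Rightarrow> real) \<Rightarrow> nat \<Rightarrow> nat \<Rightarrow> real" where
  "pair_jump L D p q = D p L * D q L - D p 0 * D q 0"

lemma Ck_family_continuous_on:
  assumes "Ck_family N L D" "i \<le> N"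
  shows "continuous_on {0..L} (D i)"
proof (cases "i = N")
  case True
  then show ?thesis using assms unfolding Ck_family_def by simp
next
  case False
  with assms have "\<forall>x\<in>{0..L}. (D i has_real_derivative D (Suc i) x) (at x within {0..L})"
    unfolding Ck_family_def by simp
  then show ?thesis
    using DERIV_continuous continuous_on_eq_continuous_within by blast
qed

lemma pair_integral_by_parts:
  assumes D: "Ck_family N L D" and L: "0 \<le> L" and "p < N" "q < N"
  shows "pair_integral L D (Suc p) q + pair_integral L D p (Suc q) = pair_jump L D p q"
proof -
  have dp: "\<And>x. x \<in> {0..L} \<Longrightarrow> (D p has_real_derivative D (Suc p) x) (at x within {0..L})"
   and dq: "\<And>x. x \<in> {0..L} \<Longrightarrow> (D q has_real_derivative D (Suc q) x) (at x within {0..L})"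
    using D assms unfolding Ck_family_def by blast+
  have "((\<lambda>x. D (Suc p) x * D q x + D (Suc q) x * D p x) has_integral pair_jump L D p q) {0..L}"
    unfolding pair_jump_def
    by (rule fundamental_theorem_of_calculus[OF L, where f = "\<lambda>x. D p x * D q x"])
       (use DERIV_mult[OF dp dq] in \<open>simp add: has_real_derivative_iff_has_vector_derivative\<close>)
  moreover have "(\<lambda>x. D (Suc p) x * D q x) integrable_on {0..L}"
                "(\<lambda>x. D p x * D (Suc q) x) integrable_on {0..L}"
    by (intro integrable_continuous_interval continuous_intros Ck_family_continuous_on[OF D];
        use assms in simp)+
  ultimately show ?thesis
    unfolding pair_integral_def by (simp add: integral_add[symmetric] mult.commute integral_unique)
qed

lemma pair_integral_by_parts_iterated:
  assumes D: "Ck_family N L D" and L: "0 \<le> L" and "s \<le> N" "2 * t \<le> s"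
  shows "pair_integral L D s 0
           = (\<Sum>i<t. (-1)^i * pair_jump L D (s - 1 - i) i) + (-1)^t * pair_integral L D (s - t) t"
  using assms(4)
proof (induction t)
  case 0
  then show ?case by simp
next
  case (Suc t)
  have "pair_integral L D (Suc (s - Suc t)) t + pair_integral L D (s - Suc t) (Suc t)
          = pair_jump L D (s - Suc t) t"
    by (rule pair_integral_by_parts[OF D L]) (use Suc.prems assms(3) in auto)
  moreover have "Suc (s - Suc t) = s - t"
    using Suc.prems by simp
  ultimately have "pair_integral L D (s - t) t
                     = pair_jump L D (s - Suc t) t - pair_integral L D (s - Suc t) (Suc t)"
    by simp
  with Suc show ?case by (simp add: algebra_simps)
qed

lemma odd_pair_integral_eq_jumps:
  assumes D: "Ck_family N L D" and L: "0 \<le> L" and "2 * j + 1 \<le> N"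
  shows "pair_integral L D (2 * j + 1) 0
           = (\<Sum>i<j. (-1)^i * pair_jump L D (2 * j - i) i) + (-1)^j * pair_jump L D j j / 2"
proof -
  have "pair_integral L D (2 * j + 1) 0
          = (\<Sum>i<j. (-1)^i * pair_jump L D (2 * j - i) i) + (-1)^j * pair_integral L D (Suc j) j"
    using pair_integral_by_parts_iterated[OF D L assms(3), of j] by (simp add: numeral_2_eq_2)
  moreover have "pair_integral L D (Suc j) j + pair_integral L D j (Suc j) = pair_jump L D j j"
    by (rule pair_integral_by_parts[OF D L]) (use assms(3) in auto)
  moreover have "pair_integral L D j (Suc j) = pair_integral L D (Suc j) j"
    unfolding pair_integral_def by (simp add: mult.commute)
  ultimately show ?thesis by simp
qed

text \<open>\<open>Z p\<close> stands for \<open>D\<^sup>pu\<close> at one endpoint.\<close>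

definition boundary_form :: "nat \<Rightarrow> (nat \<Rightarrow> real) \<Rightarrow> real" where
  "boundary_form l Z =
     (\<Sum>j=1..l. (-1)^(j+1) * ((\<Sum>i<j. (-1)^i * Z (2*j-i) * Z i) + (-1)^j * Z j ^ 2 / 2))"

lemma alternating_odd_integrals_eq_boundary_form:
  assumes D: "Ck_family (2*l+1) L D" and L: "0 \<le> L"
  shows "(\<Sum>j=1..l. (-1)^(j+1) * integral {0..L} (\<lambda>x. D (2*j+1) x * D 0 x))
           = boundary_form l (\<lambda>p. D p L) - boundary_form l (\<lambda>p. D p 0)"
proof -
  have "(\<Sum>j=1..l. (-1)^(j+1) * integral {0..L} (\<lambda>x. D (2*j+1) x * D 0 x))
     = (\<Sum>j=1..l. (-1)^(j+1) *
          ((\<Sum>i<j. (-1)^i * pair_jump L D (2*j - i) i) + (-1)^j * pair_jump L D j j / 2))"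
    using odd_pair_integral_eq_jumps[OF D L] unfolding pair_integral_def by simp
  also have "\<dots> = boundary_form l (\<lambda>p. D p L) - boundary_form l (\<lambda>p. D p 0)"
    unfolding boundary_form_def sum_subtractf[symmetric]
  proof (intro sum.cong refl)
    fix j
    have jumps: "(\<Sum>i<j. (-1)^i * pair_jump L D (2*j - i) i)
            = (\<Sum>i<j. (-1)^i * D (2*j-i) L * D i L) - (\<Sum>i<j. (-1)^i * D (2*j-i) 0 * D i 0)"
      unfolding sum_subtractf[symmetric] pair_jump_def by (simp add: right_diff_distrib mult.assoc)
    show "(-1)^(j+1) * ((\<Sum>i<j. (-1)^i * pair_jump L D (2*j - i) i) + (-1)^j * pair_jump L D j j / 2)
      = (-1)^(j+1) * ((\<Sum>i<j. (-1)^i * D (2*j-i) L * D i L) + (-1)^j * D j L ^ 2 / 2)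
        - (-1)^(j+1) * ((\<Sum>i<j. (-1)^i * D (2*j-i) 0 * D i 0) + (-1)^j * D j 0 ^ 2 / 2)"
      unfolding jumps pair_jump_def
      by (simp add: algebra_simps power2_eq_square diff_divide_distrib sum_subtractf)
  qed
  finally show ?thesis .
qed

section \<open>Reduction by the boundary relations\<close>

definition endpoint_relations :: "nat \<Rightarrow> (nat \<Rightarrow> real) \<Rightarrow> (nat \<Rightarrow> real) \<Rightarrow> bool" where
  "endpoint_relations l c Z \<longleftrightarrow> Z 0 = 0 \<and> (\<forall>k\<in>{1..l-1}. Z (l+k) = c k * Z (l-k))"

definition cross_terms :: "nat \<Rightarrow> (nat \<Rightarrow> real) \<Rightarrow> real" where
  "cross_terms l Z =
     (\<Sum>j\<in>{1..<l}. \<Sum>i\<in>{1..<l}. of_bool (i < j) * ((-1)^(j+1+i) * Z (2*j-i) * Z i))"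

lemma endpoint_relations_reflect:
  assumes "endpoint_relations l c Z" "0 < i" "i < l"
  shows "Z (2*l-i) = c (l-i) * Z i"
proof -
  have "l - i \<in> {1..l-1}"
    using assms by auto
  then have "Z (l + (l-i)) = c (l-i) * Z (l - (l-i))"
    using assms(1) unfolding endpoint_relations_def by blast
  moreover have "l + (l-i) = 2*l-i" "l - (l-i) = i"
    using assms by auto
  ultimately show ?thesis by simp
qed

lemma boundary_form_reduced:
  assumes l: "l \<ge> 1" and Z: "endpoint_relations l c Z"
  shows "boundary_form l Z
           = (\<Sum>i\<in>{1..<l}. ((-1)^(l+1+i) * c (l-i) - 1/2) * Z i ^ 2) - Z l ^ 2 / 2
             + cross_terms l Z"
proof -
  define R where "R j = (\<Sum>i\<in>{1..<j}. (-1)^i * Z (2*j-i) * Z i)" for j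
  have R: "(\<Sum>i<j. (-1)^i * Z (2*j-i) * Z i) = R j" for j
  proof -
    have "{..<j} = insert 0 {1..<j}" if "j > 0"
      using that by auto
    then show ?thesis
      unfolding R_def using Z by (cases "j = 0") (auto simp: endpoint_relations_def)
  qed
  have split: "{1..l} = insert l {1..<l}"
    using l by auto
  have "boundary_form l Z = (\<Sum>j=1..l. (-1)^(j+1) * R j) - (\<Sum>j=1..l. Z j ^ 2 / 2)"
    unfolding boundary_form_def R sum_subtractf[symmetric]
    by (intro sum.cong refl) (simp add: algebra_simps power_add)
  also have "(\<Sum>j=1..l. (-1)^(j+1) * R j) = (-1)^(l+1) * R l + (\<Sum>j\<in>{1..<l}. (-1)^(j+1) * R j)"
    unfolding split by simp
  also have "(-1)^(l+1) * R l = (\<Sum>i\<in>{1..<l}. (-1)^(l+1+i) * c (l-i) * Z i ^ 2)"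
    unfolding R_def using endpoint_relations_reflect[OF Z]
    by (simp add: sum_distrib_left power_add power2_eq_square algebra_simps)
  also have "(\<Sum>j\<in>{1..<l}. (-1)^(j+1) * R j) = cross_terms l Z"
    unfolding cross_terms_def R_def
  proof (intro sum.cong refl)
    fix j
    assume j: "j \<in> {1..<l}"
    have "(\<Sum>i\<in>{1..<l}. of_bool (i < j) * ((-1)^(j+1+i) * Z (2*j-i) * Z i))
            = (\<Sum>i\<in>{1..<j}. (-1)^(j+1+i) * Z (2*j-i) * Z i)"
      using j by (intro sum.mono_neutral_cong_right) auto
    then show "(-1)^(j+1) * (\<Sum>i\<in>{1..<j}. (-1)^i * Z (2*j-i) * Z i)
                 = (\<Sum>i\<in>{1..<l}. of_bool (i < j) * ((-1)^(j+1+i) * Z (2*j-i) * Z i))"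
      by (simp add: sum_distrib_left power_add algebra_simps)
  qed
  also have "(\<Sum>j=1..l. Z j ^ 2 / 2) = Z l ^ 2 / 2 + (\<Sum>i\<in>{1..<l}. Z i ^ 2 / 2)"
    unfolding split by simp
  finally show ?thesis
    by (simp add: algebra_simps sum_subtractf sum.distrib)
qed

section \<open>Bounding the cross terms\<close>

text \<open>An index \<open>p > l\<close> is reflected to \<open>2l - p\<close>, the index it is tied to by the boundary
  relations.\<close>

definition fold_index :: "nat \<Rightarrow> nat \<Rightarrow> nat" where
  "fold_index l p = (if p \<le> l then p else 2*l - p)"

definition fold_weight :: "nat \<Rightarrow> nat \<Rightarrow> real" where
  "fold_weight l m = (if m = l then 1 / real l else 1)"

text \<open>The parameter \<open>\<theta>\<close> is \<open>1\<close> at \<open>x = 0\<close>; at \<open>x = L\<close> it is \<open>0\<close>, which is allowed because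
  \<open>D\<^sup>lu(L) = 0\<close>.\<close>

definition cross_weight :: "nat \<Rightarrow> real \<Rightarrow> (nat \<Rightarrow> real) \<Rightarrow> nat \<Rightarrow> nat \<Rightarrow> real" where
  "cross_weight l \<theta> c j i =
     (if 2*j-i < l then 1 else if 2*j-i = l then \<theta> * real l else c (2*j-i-l) ^ 2)"

lemma abs_mult_le_weighted_squares:
  fixes u v t :: real
  assumes "t > 0"
  shows "\<bar>u * v\<bar> \<le> u^2 / (2*t) + t * v^2 / 2"
proof -
  have "0 \<le> (\<bar>u\<bar> - t * \<bar>v\<bar>)^2"
    by simp
  then have "2 * t * \<bar>u * v\<bar> \<le> u^2 + t^2 * v^2"
    by (simp add: power2_eq_square algebra_simps abs_mult)
  then show ?thesis
    using assms by (simp add: field_simps power2_eq_square)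
qed

lemma abs_cross_term_le:
  assumes Z: "endpoint_relations l c Z" and \<theta>: "\<theta> = 1 \<or> (\<theta> = 0 \<and> Z l = 0)"
    and "1 \<le> i" "i < j" "j < l"
  shows "\<bar>Z (2*j-i) * Z i\<bar>
           \<le> fold_weight l (fold_index l (2*j-i)) * Z (fold_index l (2*j-i)) ^ 2 / 2
               + cross_weight l \<theta> c j i * Z i ^ 2 / 2"
proof -
  consider "2*j-i < l" | "2*j-i = l" | "2*j-i > l"
    by linarith
  then show ?thesis
  proof cases
    case 1
    then show ?thesis
      using abs_mult_le_weighted_squares[of 1 "Z (2*j-i)" "Z i"]
      by (simp add: fold_index_def fold_weight_def cross_weight_def)
  next
    case 2
    have l: "real l > 0"
      using assms by simp
    from \<theta> show ?thesis
    proof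
      assume "\<theta> = 1"
      then show ?thesis
        using 2 abs_mult_le_weighted_squares[OF l, of "Z l" "Z i"]
        by (simp add: fold_index_def fold_weight_def cross_weight_def)
    next
      assume "\<theta> = 0 \<and> Z l = 0"
      then show ?thesis
        using 2 by (simp add: fold_index_def fold_weight_def cross_weight_def)
    qed
  next
    case 3
    define i' where "i' = 2*l - (2*j-i)"
    have "Z (2*l - i') = c (l-i') * Z i'"
      by (rule endpoint_relations_reflect[OF Z]) (use 3 assms in \<open>auto simp: i'_def\<close>)
    moreover have "2*l - i' = 2*j-i" "l - i' = 2*j-i-l" "i' \<noteq> l"
      using 3 assms by (auto simp: i'_def)
    ultimately have "\<bar>Z (2*j-i) * Z i\<bar> = \<bar>Z i' * (c (2*j-i-l) * Z i)\<bar>"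
      by (simp add: algebra_simps)
    also have "\<dots> \<le> Z i' ^ 2 / 2 + (c (2*j-i-l) * Z i) ^ 2 / 2"
      using abs_mult_le_weighted_squares[of 1] by simp
    finally show ?thesis
      using 3 \<open>i' \<noteq> l\<close>
      by (simp add: fold_index_def fold_weight_def cross_weight_def power_mult_distrib i'_def)
  qed
qed

lemma card_half_range_le:
  assumes "a < 2*b"
  shows "real (card {j::nat. a < 2*j \<and> j < b}) \<le> (2 * real b - real a - 1) / 2"
proof -
  have "{j::nat. a < 2*j \<and> j < b} = {a div 2 + 1..<b}"
    by auto
  moreover have "a div 2 + 1 \<le> b" "2 * (a div 2) \<ge> a - 1"
    using assms by linarith+
  ultimately show ?thesis
    by (simp add: of_nat_diff)
qed

lemma card_below_midpoint_le:
  assumes "i < l"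
  shows "real (card {j::nat. i < j \<and> 2*j < l + i}) \<le> (real l - real i) / 2"
proof -
  have "{j::nat. i < j \<and> 2*j < l + i} = {i+1..<(l+i+1) div 2}"
    by auto
  moreover have "i + 1 \<le> (l+i+1) div 2" "2 * ((l+i+1) div 2) \<le> l + i + 1"
    using assms by linarith+
  ultimately show ?thesis
    by (simp add: of_nat_diff)
qed

lemma card_eq_conj: "real (card {i::nat. i = e \<and> P}) = of_bool P"
  by (cases P) auto

definition fold_multiplicity :: "nat \<Rightarrow> nat \<Rightarrow> real" where
  "fold_multiplicity l m =
     (\<Sum>j\<in>{1..<l}. \<Sum>i\<in>{1..<l}. of_bool (i < j \<and> fold_index l (2*j-i) = m))"

lemma sum_fold_index_eq_multiplicity:
  fixes f :: "nat \<Rightarrow> real"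
  shows "(\<Sum>j\<in>{1..<l}. \<Sum>i\<in>{1..<l}. of_bool (i < j) * f (fold_index l (2*j-i)))
           = (\<Sum>m\<in>{1..l}. f m * fold_multiplicity l m)"
proof -
  have "of_bool (i < j) * f (fold_index l (2*j-i))
          = (\<Sum>m\<in>{1..l}. of_bool (i < j \<and> fold_index l (2*j-i) = m) * f m)"
    if "j \<in> {1..<l}" "i \<in> {1..<l}" for j i
  proof (cases "i < j")
    case True
    then have "fold_index l (2*j-i) \<in> {1..l}"
      using that unfolding fold_index_def by auto
    then have "(\<Sum>m\<in>{1..l}. (if fold_index l (2*j-i) = m then f m else 0)) = f (fold_index l (2*j-i))"
      by (simp add: sum.delta)
    moreover have "(\<Sum>m\<in>{1..l}. of_bool (i < j \<and> fold_index l (2*j-i) = m) * f m)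
        = (\<Sum>m\<in>{1..l}. (if fold_index l (2*j-i) = m then f m else 0))"
      by (rule sum.cong) (use True in auto)
    ultimately show ?thesis
      using True by simp
  qed simp
  then have "(\<Sum>j\<in>{1..<l}. \<Sum>i\<in>{1..<l}. of_bool (i < j) * f (fold_index l (2*j-i)))
      = (\<Sum>j\<in>{1..<l}. \<Sum>i\<in>{1..<l}. \<Sum>m\<in>{1..l}. of_bool (i < j \<and> fold_index l (2*j-i) = m) * f m)"
    by (intro sum.cong refl) auto
  also have "\<dots> = (\<Sum>j\<in>{1..<l}. \<Sum>m\<in>{1..l}. \<Sum>i\<in>{1..<l}.
                     of_bool (i < j \<and> fold_index l (2*j-i) = m) * f m)"
    by (rule sum.cong[OF refl], rule sum.swap)
  also have "\<dots> = (\<Sum>m\<in>{1..l}. \<Sum>j\<in>{1..<l}. \<Sum>i\<in>{1..<l}.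
                     of_bool (i < j \<and> fold_index l (2*j-i) = m) * f m)"
    by (rule sum.swap)
  also have "\<dots> = (\<Sum>m\<in>{1..l}. f m * fold_multiplicity l m)"
    unfolding fold_multiplicity_def by (simp only: sum_distrib_left sum_distrib_right mult.commute)
  finally show ?thesis .
qed

lemma fold_count_le:
  assumes "m < l" "j < l"
  shows "(\<Sum>i\<in>{1..<l}. of_bool (i < j \<and> fold_index l (2*j-i) = m) :: real)
           \<le> of_bool (m < 2*j \<and> j < m) + of_bool (2*l - m < 2*j)"
proof -
  let ?A = "{i. i = 2*j-m \<and> (m < 2*j \<and> j < m)}"
  let ?B = "{i. i = 2*j+m-2*l \<and> 2*l - m < 2*j}"
  have "{1..<l} \<inter> {i. i < j \<and> fold_index l (2*j-i) = m} \<subseteq> ?A \<union> ?B"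
  proof
    fix i
    assume i: "i \<in> {1..<l} \<inter> {i. i < j \<and> fold_index l (2*j-i) = m}"
    show "i \<in> ?A \<union> ?B"
    proof (cases "2*j-i \<le> l")
      case True
      then show ?thesis using i assms unfolding fold_index_def by auto
    next
      case False
      then have "2*l-(2*j-i) = m"
        using i unfolding fold_index_def by simp
      then show ?thesis using i assms False by auto
    qed
  qed
  then have "real (card ({1..<l} \<inter> {i. i < j \<and> fold_index l (2*j-i) = m}))
               \<le> real (card (?A \<union> ?B))"
    by (intro of_nat_mono card_mono) auto
  also have "\<dots> \<le> real (card ?A) + real (card ?B)"
    using card_Un_le[of ?A ?B] by (simp only: of_nat_add[symmetric] of_nat_le_iff)
  finally show ?thesis
    unfolding card_eq_conj by simp
qed

lemma fold_count_top_le: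
  assumes "j < l"
  shows "(\<Sum>i\<in>{1..<l}. of_bool (i < j \<and> fold_index l (2*j-i) = l) :: real) \<le> of_bool (l < 2*j)"
proof -
  have "{1..<l} \<inter> {i. i < j \<and> fold_index l (2*j-i) = l} \<subseteq> {i. i = 2*j-l \<and> l < 2*j}"
    using assms unfolding fold_index_def by auto
  then have "real (card ({1..<l} \<inter> {i. i < j \<and> fold_index l (2*j-i) = l}))
               \<le> real (card {i. i = 2*j-l \<and> l < 2*j})"
    by (intro of_nat_mono card_mono) auto
  then show ?thesis
    unfolding card_eq_conj by simp
qed

lemma fold_multiplicity_le:
  assumes m: "m \<in> {1..<l}"
  shows "fold_multiplicity l m \<le> real m - 1"
proof -
  have "fold_multiplicity l m
          \<le> (\<Sum>j\<in>{1..<l}. of_bool (m < 2*j \<and> j < m) + of_bool (2*l - m < 2*j) :: real)"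
    unfolding fold_multiplicity_def by (rule sum_mono) (use fold_count_le m in auto)
  also have "\<dots> = real (card ({1..<l} \<inter> {j. m < 2*j \<and> j < m}))
                   + real (card ({1..<l} \<inter> {j. 2*l - m < 2*j}))"
    by (simp add: sum.distrib)
  also have "\<dots> \<le> real (card {j. m < 2*j \<and> j < m}) + real (card {j. 2*l - m < 2*j \<and> j < l})"
  proof -
    have "real (card ({1..<l} \<inter> {j. m < 2*j \<and> j < m})) \<le> real (card {j. m < 2*j \<and> j < m})"
      by (intro of_nat_mono card_mono) auto
    moreover have "{1..<l} \<inter> {j. 2*l - m < 2*j} = {j. 2*l - m < 2*j \<and> j < l}"
      using m by auto
    ultimately show ?thesis by simp
  qed
  also have "\<dots> \<le> (2 * real m - real m - 1) / 2 + (2 * real l - real (2*l-m) - 1) / 2"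
    by (intro add_mono card_half_range_le) (use m in auto)
  also have "\<dots> = real m - 1"
    using m by (simp add: of_nat_diff)
  finally show ?thesis .
qed

lemma fold_multiplicity_top_le:
  assumes "l \<ge> 1"
  shows "fold_multiplicity l l \<le> (real l - 1) / 2"
proof -
  have "fold_multiplicity l l \<le> (\<Sum>j\<in>{1..<l}. of_bool (l < 2*j) :: real)"
    unfolding fold_multiplicity_def by (rule sum_mono) (use fold_count_top_le in auto)
  also have "\<dots> = real (card ({1..<l} \<inter> {j. l < 2*j}))"
    by simp
  also have "{1..<l} \<inter> {j. l < 2*j} = {j. l < 2*j \<and> j < l}"
    by auto
  also have "real (card {j. l < 2*j \<and> j < l}) \<le> (2 * real l - real l - 1) / 2"
    by (rule card_half_range_le) (use assms in auto)
  finally show ?thesis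
    by simp
qed

lemma sum_folded_squares_le:
  assumes l: "l \<ge> 2"
  shows "(\<Sum>j\<in>{1..<l}. \<Sum>i\<in>{1..<l}.
            of_bool (i < j) * (fold_weight l (fold_index l (2*j-i)) * Z (fold_index l (2*j-i)) ^ 2))
           \<le> (\<Sum>i\<in>{1..<l}. (real i - 1) * Z i ^ 2) + Z l ^ 2 / 2"
proof -
  define F where "F m = fold_weight l m * Z m ^ 2" for m
  have split: "{1..l} = insert l {1..<l}"
    using l by auto
  have "F l * fold_multiplicity l l \<le> Z l ^ 2 / real l * ((real l - 1) / 2)"
    unfolding F_def fold_weight_def
    using mult_left_mono[OF fold_multiplicity_top_le, of l "Z l ^ 2 / real l"] l by simp
  also have "\<dots> \<le> Z l ^ 2 / 2"
    using l by (simp add: field_simps)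
  finally have top: "F l * fold_multiplicity l l \<le> Z l ^ 2 / 2" .
  have low: "F m * fold_multiplicity l m \<le> (real m - 1) * Z m ^ 2" if m: "m \<in> {1..<l}" for m
    using mult_left_mono[OF fold_multiplicity_le[OF m], of "Z m ^ 2"] m
    by (simp add: F_def fold_weight_def mult.commute)
  have "(\<Sum>j\<in>{1..<l}. \<Sum>i\<in>{1..<l}. of_bool (i < j) * F (fold_index l (2*j-i)))
          = F l * fold_multiplicity l l + (\<Sum>m\<in>{1..<l}. F m * fold_multiplicity l m)"
    unfolding sum_fold_index_eq_multiplicity split by simp
  also have "\<dots> \<le> Z l ^ 2 / 2 + (\<Sum>m\<in>{1..<l}. (real m - 1) * Z m ^ 2)"
    by (intro add_mono top sum_mono low)
  finally show ?thesis
    unfolding F_def by simp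
qed

definition same_parity_indices :: "nat \<Rightarrow> nat set" where
  "same_parity_indices K = {k\<in>{1..<K}. even (K - k)}"

definition same_parity_abs_sum :: "(nat \<Rightarrow> real) \<Rightarrow> nat \<Rightarrow> real" where
  "same_parity_abs_sum c K = (\<Sum>k\<in>same_parity_indices K. \<bar>c k\<bar>)"

lemma same_parity_indices_odd:
  assumes "odd K"
  shows "same_parity_indices K = (\<lambda>m. 2*m - 1) ` {1..(K-1) div 2}"
proof (intro set_eqI iffI)
  fix x
  assume "x \<in> same_parity_indices K"
  with assms have "x = 2 * ((x+1) div 2) - 1" "(x+1) div 2 \<in> {1..(K-1) div 2}"
    unfolding same_parity_indices_def by auto presburger+
  then show "x \<in> (\<lambda>m. 2*m - 1) ` {1..(K-1) div 2}"
    by blast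
next
  fix x
  assume "x \<in> (\<lambda>m. 2*m - 1) ` {1..(K-1) div 2}"
  with assms show "x \<in> same_parity_indices K"
    unfolding same_parity_indices_def by auto
qed

lemma same_parity_indices_even:
  assumes "even K"
  shows "same_parity_indices K = (\<lambda>m. 2*m) ` {1..K div 2 - 1}"
proof (intro set_eqI iffI)
  fix x
  assume "x \<in> same_parity_indices K"
  with assms have "x = 2 * (x div 2)" "x div 2 \<in> {1..K div 2 - 1}"
    unfolding same_parity_indices_def by auto
  then show "x \<in> (\<lambda>m. 2*m) ` {1..K div 2 - 1}"
    by blast
next
  fix x
  assume "x \<in> (\<lambda>m. 2*m) ` {1..K div 2 - 1}"
  with assms show "x \<in> same_parity_indices K"
    unfolding same_parity_indices_def by auto
qed

lemma same_parity_abs_sum_odd: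
  "odd K \<Longrightarrow> same_parity_abs_sum c K = (\<Sum>m=1..(K-1) div 2. \<bar>c (2*m-1)\<bar>)"
  unfolding same_parity_abs_sum_def same_parity_indices_odd by (subst sum.reindex) (auto intro: inj_onI)

lemma same_parity_abs_sum_even:
  "even K \<Longrightarrow> same_parity_abs_sum c K = (\<Sum>m=1..K div 2 - 1. \<bar>c (2*m)\<bar>)"
  unfolding same_parity_abs_sum_def same_parity_indices_even by (subst sum.reindex) (auto intro: inj_onI)

lemma sum_squares_le_square_sum_abs:
  fixes f :: "'a \<Rightarrow> real"
  assumes "finite A"
  shows "(\<Sum>k\<in>A. f k ^ 2) \<le> (\<Sum>k\<in>A. \<bar>f k\<bar>) ^ 2"
  using assms
proof (induction A rule: finite_induct)
  case empty
  then show ?case by simp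
next
  case (insert x F)
  have "0 \<le> (\<Sum>k\<in>F. \<bar>f k\<bar>)"
    by (simp add: sum_nonneg)
  then have "f x ^ 2 + (\<Sum>k\<in>F. \<bar>f k\<bar>) ^ 2 \<le> (\<bar>f x\<bar> + (\<Sum>k\<in>F. \<bar>f k\<bar>)) ^ 2"
    by (simp add: power2_eq_square algebra_simps)
  with insert show ?case by simp
qed

lemma sum_reflected_coeff_squares_le:
  assumes i: "i < l"
  shows "(\<Sum>j\<in>{1..<l}. of_bool (l+i < 2*j) * c (2*j-i-l) ^ 2) \<le> same_parity_abs_sum c (l-i) ^ 2"
proof -
  let ?J = "{1..<l} \<inter> {j. l+i < 2*j}"
  let ?g = "\<lambda>j. 2*j-i-l"
  have "inj_on ?g ?J"
    by (rule inj_onI) auto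
  then have "(\<Sum>j\<in>{1..<l}. of_bool (l+i < 2*j) * c (2*j-i-l) ^ 2) = (\<Sum>k\<in>?g ` ?J. c k ^ 2)"
    by (simp add: sum.reindex)
  also have "\<dots> \<le> (\<Sum>k\<in>same_parity_indices (l-i). c k ^ 2)"
  proof (rule sum_mono2)
    show "finite (same_parity_indices (l-i))"
      unfolding same_parity_indices_def by simp
    show "?g ` ?J \<subseteq> same_parity_indices (l-i)"
    proof
      fix k
      assume "k \<in> ?g ` ?J"
      then obtain j where j: "j \<in> ?J" "k = ?g j"
        by blast
      then have "l - i - k = 2*(l-j)"
        using i by auto
      with j i show "k \<in> same_parity_indices (l-i)"
        unfolding same_parity_indices_def by auto
    qed
  qed auto
  also have "\<dots> \<le> same_parity_abs_sum c (l-i) ^ 2"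
    unfolding same_parity_abs_sum_def
    by (rule sum_squares_le_square_sum_abs) (simp add: same_parity_indices_def)
  finally show ?thesis .
qed

lemma sum_cross_weight_le:
  assumes i: "i \<in> {1..<l}" and \<theta>: "\<theta> \<ge> 0"
  shows "(\<Sum>j\<in>{1..<l}. of_bool (i < j) * cross_weight l \<theta> c j i)
           \<le> (real l - real i) / 2 + \<theta> * real l + same_parity_abs_sum c (l-i) ^ 2"
proof -
  have "(\<Sum>j\<in>{1..<l}. of_bool (i < j) * cross_weight l \<theta> c j i)
          \<le> (\<Sum>j\<in>{1..<l}. of_bool (i < j \<and> 2*j < l+i) + \<theta> * real l * of_bool (2*j = l+i)
                            + of_bool (l+i < 2*j) * c (2*j-i-l) ^ 2)"
  proof (rule sum_mono)
    fix j
    consider "2*j < l+i" | "2*j = l+i" | "l+i < 2*j"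
      by linarith
    then show "of_bool (i < j) * cross_weight l \<theta> c j i
                 \<le> of_bool (i < j \<and> 2*j < l+i) + \<theta> * real l * of_bool (2*j = l+i)
                   + of_bool (l+i < 2*j) * c (2*j-i-l) ^ 2"
      by cases (use \<theta> i in \<open>auto simp: cross_weight_def\<close>)
  qed
  also have "\<dots> = (\<Sum>j\<in>{1..<l}. of_bool (i < j \<and> 2*j < l+i))
                   + \<theta> * real l * (\<Sum>j\<in>{1..<l}. of_bool (2*j = l+i))
                   + (\<Sum>j\<in>{1..<l}. of_bool (l+i < 2*j) * c (2*j-i-l) ^ 2)"
    by (simp only: sum.distrib sum_distrib_left)
  also have "\<dots> \<le> (real l - real i) / 2 + \<theta> * real l * 1 + same_parity_abs_sum c (l-i) ^ 2"
  proof (intro add_mono mult_left_mono)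
    have "finite {j. i < j \<and> 2*j < l+i}"
      by (rule finite_subset[of _ "{..<l+i}"]) auto
    then have "real (card ({1..<l} \<inter> {j. i < j \<and> 2*j < l+i})) \<le> real (card {j. i < j \<and> 2*j < l+i})"
      by (intro of_nat_mono card_mono) auto
    also have "\<dots> \<le> (real l - real i) / 2"
      by (rule card_below_midpoint_le) (use i in auto)
    finally show "(\<Sum>j\<in>{1..<l}. of_bool (i < j \<and> 2*j < l+i)) \<le> (real l - real i) / 2"
      by simp
    have "card ({1..<l} \<inter> {j. 2*j = l+i}) \<le> card {(l+i) div 2}"
      by (rule card_mono) auto
    then show "(\<Sum>j\<in>{1..<l}. of_bool (2*j = l+i)) \<le> (1::real)"
      by simp
    show "(\<Sum>j\<in>{1..<l}. of_bool (l+i < 2*j) * c (2*j-i-l) ^ 2) \<le> same_parity_abs_sum c (l-i) ^ 2"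
      by (rule sum_reflected_coeff_squares_le) (use i in auto)
    show "0 \<le> \<theta> * real l"
      using \<theta> by simp
  qed
  finally show ?thesis
    by simp
qed

lemma sum_cross_weighted_squares_le:
  assumes "\<theta> \<ge> 0"
  shows "(\<Sum>j\<in>{1..<l}. \<Sum>i\<in>{1..<l}. of_bool (i < j) * (cross_weight l \<theta> c j i * Z i ^ 2))
           \<le> (\<Sum>i\<in>{1..<l}. Z i ^ 2 * ((real l - real i) / 2 + \<theta> * real l
                                         + same_parity_abs_sum c (l-i) ^ 2))"
proof -
  have "(\<Sum>j\<in>{1..<l}. \<Sum>i\<in>{1..<l}. of_bool (i < j) * (cross_weight l \<theta> c j i * Z i ^ 2))
          = (\<Sum>i\<in>{1..<l}. Z i ^ 2 * (\<Sum>j\<in>{1..<l}. of_bool (i < j) * cross_weight l \<theta> c j i))"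
    by (subst sum.swap) (simp add: sum_distrib_left algebra_simps)
  also have "\<dots> \<le> (\<Sum>i\<in>{1..<l}. Z i ^ 2 * ((real l - real i) / 2 + \<theta> * real l
                                                + same_parity_abs_sum c (l-i) ^ 2))"
    using assms by (intro sum_mono mult_left_mono sum_cross_weight_le) auto
  finally show ?thesis .
qed

lemma cross_terms_abs_le:
  assumes l: "l \<ge> 2" and Z: "endpoint_relations l c Z" and \<theta>: "\<theta> = 1 \<or> (\<theta> = 0 \<and> Z l = 0)"
  shows "\<bar>cross_terms l Z\<bar>
           \<le> (\<Sum>i\<in>{1..<l}. ((real i - 1) / 2 + (real l - real i) / 4 + \<theta> * real l / 2
                               + same_parity_abs_sum c (l-i) ^ 2 / 2) * Z i ^ 2) + Z l ^ 2 / 4"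
proof -
  define F where "F j i = fold_weight l (fold_index l (2*j-i)) * Z (fold_index l (2*j-i)) ^ 2" for j i
  define V where "V j i = cross_weight l \<theta> c j i * Z i ^ 2" for j i
  have "\<bar>cross_terms l Z\<bar>
          \<le> (\<Sum>j\<in>{1..<l}. \<Sum>i\<in>{1..<l}. \<bar>of_bool (i < j) * ((-1)^(j+1+i) * Z (2*j-i) * Z i)\<bar>)"
    unfolding cross_terms_def by (rule order_trans[OF sum_abs sum_mono[OF sum_abs]])
  also have "\<dots> \<le> (\<Sum>j\<in>{1..<l}. \<Sum>i\<in>{1..<l}. of_bool (i < j) * (F j i / 2 + V j i / 2))"
  proof (intro sum_mono)
    fix j i
    assume "j \<in> {1..<l}" "i \<in> {1..<l}"
    then show "\<bar>of_bool (i < j) * ((-1)^(j+1+i) * Z (2*j-i) * Z i)\<bar>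
                 \<le> of_bool (i < j) * (F j i / 2 + V j i / 2)"
      using abs_cross_term_le[OF Z \<theta>, of i j] by (auto simp: abs_mult F_def V_def)
  qed
  also have "\<dots> = (\<Sum>j\<in>{1..<l}. \<Sum>i\<in>{1..<l}. of_bool (i < j) * F j i) / 2
                   + (\<Sum>j\<in>{1..<l}. \<Sum>i\<in>{1..<l}. of_bool (i < j) * V j i) / 2"
    by (simp del: sum_of_bool_mult_eq sum_mult_of_bool_eq
        add: sum.distrib sum_divide_distrib algebra_simps)
  finally have abs_le: "\<bar>cross_terms l Z\<bar> \<le> \<dots>" .
  have F_le: "(\<Sum>j\<in>{1..<l}. \<Sum>i\<in>{1..<l}. of_bool (i < j) * F j i)
                \<le> (\<Sum>i\<in>{1..<l}. (real i - 1) * Z i ^ 2) + Z l ^ 2 / 2"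
    unfolding F_def by (rule sum_folded_squares_le[OF l])
  have V_le: "(\<Sum>j\<in>{1..<l}. \<Sum>i\<in>{1..<l}. of_bool (i < j) * V j i)
                \<le> (\<Sum>i\<in>{1..<l}. Z i ^ 2 * ((real l - real i) / 2 + \<theta> * real l
                                             + same_parity_abs_sum c (l-i) ^ 2))"
    unfolding V_def using \<theta> by (intro sum_cross_weighted_squares_le) auto
  have "\<bar>cross_terms l Z\<bar>
          \<le> ((\<Sum>i\<in>{1..<l}. (real i - 1) * Z i ^ 2) + Z l ^ 2 / 2) / 2
            + (\<Sum>i\<in>{1..<l}. Z i ^ 2 * ((real l - real i) / 2 + \<theta> * real l
                                         + same_parity_abs_sum c (l-i) ^ 2)) / 2"
    by (rule order_trans[OF abs_le]) (intro add_mono divide_right_mono F_le V_le; simp)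
  also have "\<dots> = (\<Sum>i\<in>{1..<l}. ((real i - 1) / 2 + (real l - real i) / 4 + \<theta> * real l / 2
                                     + same_parity_abs_sum c (l-i) ^ 2 / 2) * Z i ^ 2) + Z l ^ 2 / 4"
    by (simp add: sum_divide_distrib sum.distrib[symmetric] algebra_simps add_divide_distrib)
  finally show ?thesis .
qed

section \<open>Coercivity of the boundary form\<close>

definition lower_margin :: "nat \<Rightarrow> (nat \<Rightarrow> real) \<Rightarrow> nat \<Rightarrow> real" where
  "lower_margin l c i =
     (-1)^(l+1+i) * c (l-i) - 1/2 - ((real i - 1) / 2 + (real l - real i) / 4)
     - same_parity_abs_sum c (l-i) ^ 2 / 2"

definition upper_margin :: "nat \<Rightarrow> (nat \<Rightarrow> real) \<Rightarrow> nat \<Rightarrow> real" where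
  "upper_margin l c i =
     1/2 - (-1)^(l+1+i) * c (l-i) - ((real i - 1) / 2 + (real l - real i) / 4) - real l / 2
     - same_parity_abs_sum c (l-i) ^ 2 / 2"

lemma boundary_form_ge:
  assumes l: "l \<ge> 2" and Z: "endpoint_relations l c Z" "Z l = 0"
  shows "(\<Sum>i\<in>{1..<l}. lower_margin l c i * Z i ^ 2) \<le> boundary_form l Z"
proof -
  have "\<bar>cross_terms l Z\<bar>
          \<le> (\<Sum>i\<in>{1..<l}. ((real i - 1) / 2 + (real l - real i) / 4 + 0 * real l / 2
                              + same_parity_abs_sum c (l-i) ^ 2 / 2) * Z i ^ 2) + Z l ^ 2 / 4"
    by (rule cross_terms_abs_le) (use l Z in auto)
  moreover have "(\<Sum>i\<in>{1..<l}. lower_margin l c i * Z i ^ 2)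
      = (\<Sum>i\<in>{1..<l}. ((-1)^(l+1+i) * c (l-i) - 1/2) * Z i ^ 2)
        - (\<Sum>i\<in>{1..<l}. ((real i - 1) / 2 + (real l - real i) / 4 + 0 * real l / 2
                           + same_parity_abs_sum c (l-i) ^ 2 / 2) * Z i ^ 2)"
    unfolding lower_margin_def sum_subtractf[symmetric] by (intro sum.cong refl) (simp add: algebra_simps)
  ultimately show ?thesis
    using boundary_form_reduced[OF _ Z(1)] l Z(2) by simp
qed

lemma boundary_form_le:
  assumes l: "l \<ge> 2" and Z: "endpoint_relations l c Z"
  shows "boundary_form l Z \<le> - (\<Sum>i\<in>{1..<l}. upper_margin l c i * Z i ^ 2) - Z l ^ 2 / 4"
proof -
  have "\<bar>cross_terms l Z\<bar>
          \<le> (\<Sum>i\<in>{1..<l}. ((real i - 1) / 2 + (real l - real i) / 4 + 1 * real l / 2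
                              + same_parity_abs_sum c (l-i) ^ 2 / 2) * Z i ^ 2) + Z l ^ 2 / 4"
    by (rule cross_terms_abs_le) (use l Z in auto)
  moreover have "(\<Sum>i\<in>{1..<l}. upper_margin l c i * Z i ^ 2)
      = - (\<Sum>i\<in>{1..<l}. ((-1)^(l+1+i) * c (l-i) - 1/2) * Z i ^ 2)
        - (\<Sum>i\<in>{1..<l}. ((real i - 1) / 2 + (real l - real i) / 4 + 1 * real l / 2
                           + same_parity_abs_sum c (l-i) ^ 2 / 2) * Z i ^ 2)"
    unfolding upper_margin_def sum_subtractf[symmetric] sum_negf[symmetric]
    by (intro sum.cong refl) (simp add: algebra_simps)
  ultimately show ?thesis
    using boundary_form_reduced[OF _ Z] l by simp
qed

lemma coeff_conds_margins:
  assumes l: "l \<ge> 4" and cc: "coeff_conds l a b" and i: "i \<in> {1..<l}"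
  shows "0 < lower_margin l b i" and "0 < upper_margin l a i"
proof -
  define k where "k = l - i"
  have k: "1 \<le> k" "k \<le> l - 1" and i_le: "real i \<le> real l - 1"
    using i by (auto simp: k_def)
  have "l + 1 + i = (k + 1) + 2 * i"
    using i by (simp add: k_def)
  then have sign: "(-1::real) ^ (l+1+i) = (-1) ^ (k+1)"
    by (simp add: power_add power_mult)
  have C: "real l - 2 < b 1" "b 2 < 2 - real l" "a 1 < 5 - 2 * real l" "2 * real l - 5 < a 2"
    using cc l unfolding coeff_conds_def by auto
  have C_odd: "real l - 2 + (\<Sum>m=1..(j-1) div 2. \<bar>b (2*m-1)\<bar>) ^ 2 / 2 < b j
               \<and> a j < 5 - 2 * real l - (\<Sum>m=1..(j-1) div 2. \<bar>a (2*m-1)\<bar>) ^ 2 / 2"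
    if "odd j" "3 \<le> j" "j \<le> l - 1" for j
    using cc l that unfolding coeff_conds_def by auto
  have C_even: "b j < 2 - real l - (\<Sum>m=1..j div 2 - 1. \<bar>b (2*m)\<bar>) ^ 2 / 2
                \<and> 2 * real l - 5 + (\<Sum>m=1..j div 2 - 1. \<bar>a (2*m)\<bar>) ^ 2 / 2 < a j"
    if "even j" "4 \<le> j" "j \<le> l - 1" for j
    using cc l that unfolding coeff_conds_def by auto
  have "k = 1 \<or> k = 2 \<or> (odd k \<and> k \<ge> 3) \<or> (even k \<and> k \<ge> 4)"
    using k(1) by presburger
  then have coeffs: "real l - 2 + same_parity_abs_sum b k ^ 2 / 2 < (-1) ^ (k+1) * b k
             \<and> (-1) ^ (k+1) * a k < 5 - 2 * real l - same_parity_abs_sum a k ^ 2 / 2"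
    using C C_odd[of k] C_even[of k] k(2) same_parity_abs_sum_odd[of k] same_parity_abs_sum_even[of k]
    by auto
  have "real l \<ge> 4"
    using l by simp
  with coeffs[THEN conjunct1] i_le show "0 < lower_margin l b i"
    unfolding lower_margin_def sign k_def[symmetric] by (simp add: field_simps)
  from \<open>real l \<ge> 4\<close> coeffs[THEN conjunct2] i_le show "0 < upper_margin l a i"
    unfolding upper_margin_def sign k_def[symmetric] by (simp add: field_simps)
qed

lemma ex_pos_lower_bound_finite:
  fixes f :: "'a \<Rightarrow> real"
  assumes "finite I" "\<forall>i\<in>I. 0 < f i"
  shows "\<exists>M>0. \<forall>i\<in>I. M \<le> f i"
proof (intro exI conjI)
  show "0 < Min (insert 1 (f ` I))" "\<forall>i\<in>I. Min (insert 1 (f ` I)) \<le> f i"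
    using assms by auto
qed

text \<open>\<open>X\<close> and \<open>Y\<close> stand for the derivatives at \<open>L\<close> and at \<open>0\<close>, respectively.\<close>

definition boundary_form_coercive :: "nat \<Rightarrow> (nat \<Rightarrow> real) \<Rightarrow> (nat \<Rightarrow> real) \<Rightarrow> real \<Rightarrow> bool" where
  "boundary_form_coercive l a b M \<longleftrightarrow>
     (\<forall>X Y. endpoint_relations l b X \<and> X l = 0 \<and> endpoint_relations l a Y \<longrightarrow>
        M * ((\<Sum>i\<in>{1..<l}. X i ^ 2 + Y i ^ 2) + Y l ^ 2) \<le> boundary_form l X - boundary_form l Y)"

lemma boundary_form_coercive_2:
  assumes "coeff_conds 2 a b"
  shows "\<exists>M>0. boundary_form_coercive 2 a b M"
proof -
  have c: "b 1 > 1/2" "a 1 < 1/2"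
    using assms unfolding coeff_conds_def by auto
  define M where "M = min (b 1 - 1/2) (min (1/2 - a 1) (1/2))"
  have M: "M > 0" "M \<le> b 1 - 1/2" "M \<le> 1/2 - a 1" "M \<le> 1/2"
    using c unfolding M_def by (auto simp: min_def)
  have "boundary_form_coercive 2 a b M"
    unfolding boundary_form_coercive_def
  proof (intro allI impI)
    fix X Y
    assume H: "endpoint_relations 2 b X \<and> X 2 = 0 \<and> endpoint_relations 2 a Y"
    then have HX: "endpoint_relations 2 b X" and HY: "endpoint_relations 2 a Y"
      by simp_all
    have s: "{1..<2::nat} = {1}"
      by auto
    have cross: "cross_terms 2 Z = 0" for Z
      unfolding cross_terms_def s by simp
    have "boundary_form 2 X - boundary_form 2 Y
            = (b 1 - 1/2) * X 1 ^ 2 + (1/2 - a 1) * Y 1 ^ 2 + 1/2 * Y 2 ^ 2"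
      using H unfolding boundary_form_reduced[OF one_le_numeral HX] boundary_form_reduced[OF one_le_numeral HY]
        cross s
      by (simp add: algebra_simps)
    moreover have "M * X 1 ^ 2 \<le> (b 1 - 1/2) * X 1 ^ 2" "M * Y 1 ^ 2 \<le> (1/2 - a 1) * Y 1 ^ 2"
      "M * Y 2 ^ 2 \<le> 1/2 * Y 2 ^ 2"
      by (rule mult_right_mono; use M in simp)+
    ultimately show "M * ((\<Sum>i\<in>{1..<2}. X i ^ 2 + Y i ^ 2) + Y 2 ^ 2)
                       \<le> boundary_form 2 X - boundary_form 2 Y"
      unfolding s by (simp add: algebra_simps)
  qed
  with M(1) show ?thesis
    by blast
qed

lemma boundary_form_coercive_3:
  assumes "coeff_conds 3 a b"
  shows "\<exists>M>0. boundary_form_coercive 3 a b M"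
proof -
  have c: "b 2 < -1/2" "b 1 > 1/2" "a 2 > 1/2" "a 1 < 1/2"
    using assms unfolding coeff_conds_def by auto
  define M where "M = min (- b 2 - 1/2) (min (b 1 - 1/2) (min (a 2 - 1/2) (min (1/2 - a 1) (1/4))))"
  have M: "M > 0" "M \<le> - b 2 - 1/2" "M \<le> b 1 - 1/2" "M \<le> a 2 - 1/2" "M \<le> 1/2 - a 1" "M \<le> 1/4"
    using c unfolding M_def by (auto simp: min_def)
  have "boundary_form_coercive 3 a b M"
    unfolding boundary_form_coercive_def
  proof (intro allI impI)
    fix X Y
    assume H: "endpoint_relations 3 b X \<and> X 3 = 0 \<and> endpoint_relations 3 a Y"
    then have HX: "endpoint_relations 3 b X" and HY: "endpoint_relations 3 a Y"
      by simp_all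
    have s: "{1..<3::nat} = {1, 2}"
      by auto
    have cross: "cross_terms 3 Z = Z 3 * Z 1" for Z
      unfolding cross_terms_def s by simp
    have "boundary_form 3 X - boundary_form 3 Y
            = (- b 2 - 1/2) * X 1 ^ 2 + (b 1 - 1/2) * X 2 ^ 2 + (a 2 + 1/2) * Y 1 ^ 2
              + (1/2 - a 1) * Y 2 ^ 2 + 1/2 * Y 3 ^ 2 - Y 1 * Y 3"
      using H unfolding boundary_form_reduced[OF one_le_numeral HX] boundary_form_reduced[OF one_le_numeral HY]
        cross s
      by (simp add: algebra_simps)
    moreover have "Y 1 * Y 3 \<le> Y 1 ^ 2 + Y 3 ^ 2 / 4"
      using sum_squares_bound[of "Y 1" "Y 3 / 2"] by (simp add: power_divide)
    moreover have "M * X 1 ^ 2 \<le> (- b 2 - 1/2) * X 1 ^ 2" "M * X 2 ^ 2 \<le> (b 1 - 1/2) * X 2 ^ 2"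
      "M * Y 1 ^ 2 \<le> (a 2 - 1/2) * Y 1 ^ 2" "M * Y 2 ^ 2 \<le> (1/2 - a 1) * Y 2 ^ 2"
      "M * Y 3 ^ 2 \<le> 1/4 * Y 3 ^ 2"
      by (rule mult_right_mono; use M in simp)+
    ultimately show "M * ((\<Sum>i\<in>{1..<3}. X i ^ 2 + Y i ^ 2) + Y 3 ^ 2)
                       \<le> boundary_form 3 X - boundary_form 3 Y"
      unfolding s by (simp add: algebra_simps)
  qed
  with M(1) show ?thesis
    by blast
qed

lemma boundary_form_coercive_ge4:
  assumes l: "l \<ge> 4" and cc: "coeff_conds l a b"
  shows "\<exists>M>0. boundary_form_coercive l a b M"
proof -
  obtain M0 where M0: "M0 > 0" "\<forall>i\<in>{1..<l}. M0 \<le> min (lower_margin l b i) (upper_margin l a i)"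
    using ex_pos_lower_bound_finite[of "{1..<l}" "\<lambda>i. min (lower_margin l b i) (upper_margin l a i)"]
      coeff_conds_margins[OF l cc] by auto
  define M where "M = min M0 (1/4)"
  have M_le: "M \<le> lower_margin l b i" "M \<le> upper_margin l a i" if "i \<in> {1..<l}" for i
    using M0(2) that unfolding M_def by fastforce+
  have "boundary_form_coercive l a b M"
    unfolding boundary_form_coercive_def
  proof (intro allI impI)
    fix X Y
    assume H: "endpoint_relations l b X \<and> X l = 0 \<and> endpoint_relations l a Y"
    have "(\<Sum>i\<in>{1..<l}. M * X i ^ 2) \<le> (\<Sum>i\<in>{1..<l}. lower_margin l b i * X i ^ 2)"
      using M_le by (intro sum_mono mult_right_mono) auto
    also have "\<dots> \<le> boundary_form l X"
      by (rule boundary_form_ge) (use l H in auto)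
    finally have X: "(\<Sum>i\<in>{1..<l}. M * X i ^ 2) \<le> boundary_form l X" .
    have "(\<Sum>i\<in>{1..<l}. M * Y i ^ 2) \<le> (\<Sum>i\<in>{1..<l}. upper_margin l a i * Y i ^ 2)"
      using M_le by (intro sum_mono mult_right_mono) auto
    moreover have "boundary_form l Y \<le> - (\<Sum>i\<in>{1..<l}. upper_margin l a i * Y i ^ 2) - Y l ^ 2 / 4"
      by (rule boundary_form_le) (use l H in auto)
    moreover have "M * Y l ^ 2 \<le> Y l ^ 2 / 4"
      using mult_right_mono[of M "1/4" "Y l ^ 2"] by (simp add: M_def)
    moreover have "M * ((\<Sum>i\<in>{1..<l}. X i ^ 2 + Y i ^ 2) + Y l ^ 2)
        = (\<Sum>i\<in>{1..<l}. M * X i ^ 2) + (\<Sum>i\<in>{1..<l}. M * Y i ^ 2) + M * Y l ^ 2"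
      by (simp add: sum_distrib_left sum.distrib algebra_simps)
    ultimately show "M * ((\<Sum>i\<in>{1..<l}. X i ^ 2 + Y i ^ 2) + Y l ^ 2)
                       \<le> boundary_form l X - boundary_form l Y"
      using X by linarith
  qed
  moreover have "M > 0"
    using M0 by (simp add: M_def)
  ultimately show ?thesis
    by blast
qed

lemma boundary_form_coercive_exists:
  assumes "l \<ge> 2" "coeff_conds l a b"
  shows "\<exists>M>0. boundary_form_coercive l a b M"
proof -
  consider "l = 2" | "l = 3" | "l \<ge> 4"
    using assms(1) by linarith
  then show ?thesis
    by cases (use assms boundary_form_coercive_2 boundary_form_coercive_3
        boundary_form_coercive_ge4 in auto)
qed

theorem mainTheorem5:
  fixes l :: nat and a b :: "nat \<Rightarrow> real"
  assumes "l \<ge> 2" and "coeff_conds l a b"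
  shows "\<exists>M>0. \<forall>L>0. \<forall>D :: nat \<Rightarrow> real \<Rightarrow> real.
           Ck_family (2*l+1) L D \<and> boundary_conds l L a b D \<longrightarrow>
           (\<Sum>j=1..l. (-1)^(j+1) * integral {0..L} (\<lambda>x. D (2*j+1) x * D 0 x))
             \<ge> M * ((\<Sum>i=1..l-1. (D i L)^2 + (D i 0)^2) + (D l 0)^2)
           \<and> M * ((\<Sum>i=1..l-1. (D i L)^2 + (D i 0)^2) + (D l 0)^2) \<ge> 0"
proof -
  obtain M where M: "M > 0" "boundary_form_coercive l a b M"
    using boundary_form_coercive_exists[OF assms] by blast
  have range: "{1..l-1} = {1..<l}"
    using assms(1) by auto
  show ?thesis
  proof (intro exI[of _ M] conjI allI impI M(1))
    fix L :: real and D :: "nat \<Rightarrow> real \<Rightarrow> real"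
    assume L: "L > 0" and D: "Ck_family (2*l+1) L D \<and> boundary_conds l L a b D"
    have "endpoint_relations l b (\<lambda>p. D p L) \<and> D l L = 0 \<and> endpoint_relations l a (\<lambda>p. D p 0)"
      using D unfolding boundary_conds_def endpoint_relations_def by auto
    then have "M * ((\<Sum>i\<in>{1..<l}. D i L ^ 2 + D i 0 ^ 2) + D l 0 ^ 2)
                 \<le> boundary_form l (\<lambda>p. D p L) - boundary_form l (\<lambda>p. D p 0)"
      using M(2) unfolding boundary_form_coercive_def by blast
    then show "(\<Sum>j=1..l. (-1)^(j+1) * integral {0..L} (\<lambda>x. D (2*j+1) x * D 0 x))
                 \<ge> M * ((\<Sum>i=1..l-1. (D i L)^2 + (D i 0)^2) + (D l 0)^2)"
      unfolding range using alternating_odd_integrals_eq_boundary_form[of l L D] D L by simp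
    show "M * ((\<Sum>i=1..l-1. (D i L)^2 + (D i 0)^2) + (D l 0)^2) \<ge> 0"
      using M(1) by (intro mult_nonneg_nonneg add_nonneg_nonneg sum_nonneg) auto
  qed
qed

end
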